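(* Suppose $\int_{[0,1]}|\log(1-p)|\,\Lambda(dp)<\infty$. Then for every $\varepsilon>0$ there exists a positive integer $K_\varepsilon$ such that for all integers $m,n$ with $1\le m<n$, $P\big(m<N_n(t)\le K_\varepsilon m\text{ for some }t\ge0\big)>1-\varepsilon$.
   Context: Let $\Lambda$ be a nonzero finite measure on $[0,1]$. For $n\ge 1$, the $\Lambda$-coalescent started with $n$ blocks, $(\Pi_n(t))_{t\ge0}$, is the continuous-time Markov chain on partitions of $\{1,\dots,n\}$, started from the partition into singletons, in which, whenever there are $b$ blocks, each particular collection of $k\ge2$ blocks merges into a single block at rate $\lambda_{b,k}=\int_{[0,1]}p^{k-2}(1-p)^{b-k}\,\Lambda(dp)$, and no other transitions occur. $N_n(t)$ denotes the number of blocks of $\Pi_n(t)$. *)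

theory Defs
  imports "HOL-Probability.Probability"
begin

text \<open>Rates of the Lambda-coalescent: lambda_{b,k} = int p^(k-2) (1-p)^(b-k) Lambda(dp).\<close>
definition lam :: "real measure \<Rightarrow> nat \<Rightarrow> nat \<Rightarrow> real" where
  "lam L b k = (\<integral>p. p ^ (k - 2) * (1 - p) ^ (b - k) \<partial>L)"

definition lamtot :: "real measure \<Rightarrow> nat \<Rightarrow> real" where
  "lamtot L b = (\<Sum>k=2..b. real (b choose k) * lam L b k)"

definition merge :: "nat set set \<Rightarrow> nat set set \<Rightarrow> nat set set" where
  "merge P S = insert (\<Union>S) (P - S)"

text \<open>One step of the jump chain of the partition-valued Lambda-coalescent:
  from a partition P with b = card P \<ge> 2 blocks, a particular collection S of
  k \<ge> 2 blocks merges with probability lam b k / lamtot b (rate / total rate).\<close>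
definition step :: "real measure \<Rightarrow> nat set set \<Rightarrow> nat set set pmf" where
  "step L P = (if card P \<le> 1 then return_pmf P
     else map_pmf (merge P)
       (embed_pmf (\<lambda>S. if S \<subseteq> P \<and> 2 \<le> card S
                        then lam L (card P) (card S) / lamtot L (card P) else 0)))"

text \<open>Distribution of the first j jumps (the list of visited states, j+1 entries).\<close>
fun path :: "real measure \<Rightarrow> nat \<Rightarrow> nat set set \<Rightarrow> nat set set list pmf" where
  "path L 0 P = return_pmf [P]"
| "path L (Suc j) P = bind_pmf (step L P) (\<lambda>Q. map_pmf (Cons P) (path L j Q))"

definition singletons :: "nat \<Rightarrow> nat set set" where
  "singletons n = (\<lambda>i. {i}) ` {1..n}"

text \<open>Sequence of states visited by Pi_n (jump chain); n jumps suffice to reach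
  the absorbing one-block state, since each jump decreases the number of blocks.\<close>
definition coal_path :: "real measure \<Rightarrow> nat \<Rightarrow> nat set set list pmf" where
  "coal_path L n = path L n (singletons n)"

end

theory Submission
  imports Defs "HOL-Real_Asymp.Real_Asymp"
begin

(* A path of the jump chain that never has between m + 1 and K m blocks must jump, in a single
   merger, from more than K m blocks to at most m blocks. From b blocks the expected number of
   blocks lost per unit time is at least (b - 1) \<Lambda>([0,1]), whereas the rate of jumping to at most
   m blocks is the \<Lambda>-integral of a density that is exponentially small in b for small p and at
   most of order min(1, m / (b (1 - p))) otherwise. Summing these rates with weights 1 / c over
   c > K m gives a potential whose expected decrease dominates the rate of the fatal jump, so it
   bounds the probability of missing the window. The potential is at most the \<Lambda>-integral of a
   function of p that is dominated by a multiple of 1 + |log (1 - p)| and tends to 0 as K grows;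
   by dominated convergence the bound is small for large K, uniformly in m and n. *)

section \<open>Merging blocks of a partition\<close>

definition merge_choices :: "nat set set \<Rightarrow> nat set set set" where
  "merge_choices P = {S. S \<subseteq> P \<and> 2 \<le> card S}"

lemma finite_merge_choices: "finite P \<Longrightarrow> finite (merge_choices P)"
  unfolding merge_choices_def by (rule finite_subset[of _ "Pow P"]) auto

lemma partition_on_merge:
  assumes P: "partition_on A P" and S: "S \<subseteq> P" "S \<noteq> {}"
  shows "partition_on A (merge P S)"
proof -
  have disj: "disjoint P" and ne: "{} \<notin> P" and A: "\<Union>P = A"
    using P by (auto simp: partition_on_def)
  have "disjnt C B" if "C \<in> S" "B \<in> P - S" for C B
    using that S(1) by (intro pairwiseD[OF disj]) auto
  then have sep: "disjnt (\<Union>S) (\<Union>(P - S))" by simp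
  have "\<Union>P = \<Union>S \<union> \<Union>(P - S)"
    using S(1) by (metis Diff_partition Union_Un_distrib)
  then have "\<Union>(P - S) = A - \<Union>S"
    using A sep by (simp add: Un_Diff Diff_triv disjnt_def Int_commute)
  then have "partition_on (A - \<Union>S) (P - S)"
    unfolding partition_on_def using pairwise_subset[OF disj] ne by auto
  moreover have "\<Union>S \<subseteq> A" using Union_mono[OF S(1)] A by simp
  moreover have "\<Union>S \<noteq> {}"
  proof -
    obtain C where "C \<in> S" using S(2) by blast
    moreover have "C \<noteq> {}" using \<open>C \<in> S\<close> ne S(1) by auto
    ultimately show ?thesis by auto
  qed
  ultimately show ?thesis
    unfolding merge_def partition_on_insert[OF sep] by blast
qed

lemma card_merge:
  assumes P: "partition_on A P" and "finite A" and S: "S \<subseteq> P" "S \<noteq> {}"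
  shows "card (merge P S) = card P - card S + 1"
proof -
  have "finite P" using finite_elements assms by blast
  moreover have "finite S" using S(1) \<open>finite P\<close> by (rule finite_subset)
  moreover have "\<Union>S \<notin> P - S"
  proof
    assume U: "\<Union>S \<in> P - S"
    obtain C where C: "C \<in> S" using S by blast
    then have "C \<noteq> \<Union>S" using U by blast
    with partition_onD2[OF P] have "C \<inter> \<Union>S = {}"
      using C S U by (metis DiffD1 disjointD subsetD)
    moreover have "C \<noteq> {}" using partition_onD3[OF P] C S by blast
    ultimately show False using C by blast
  qed
  ultimately have "card (merge P S) = card (P - S) + 1"
    unfolding merge_def by simp
  also have "card (P - S) = card P - card S"
    using card_Diff_subset[OF \<open>finite S\<close> S(1)] .
  finally show ?thesis .
qed

lemma sum_merge_choices_by_card: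
  fixes g :: "nat \<Rightarrow> real"
  assumes "finite P"
  shows "(\<Sum>S\<in>merge_choices P. g (card S)) = (\<Sum>k=2..card P. real (card P choose k) * g k)"
proof -
  have "(\<Sum>S\<in>merge_choices P. g (card S))
      = (\<Sum>k=2..card P. \<Sum>S\<in>{S \<in> merge_choices P. card S = k}. g (card S))"
    by (rule sum.group[symmetric])
       (use assms finite_merge_choices in \<open>auto simp: merge_choices_def intro: card_mono[OF assms]\<close>)
  also have "\<dots> = (\<Sum>k=2..card P. real (card P choose k) * g k)"
  proof (rule sum.cong[OF refl])
    fix k assume "k \<in> {2..card P}"
    then have "{S \<in> merge_choices P. card S = k} = {S. S \<subseteq> P \<and> card S = k}"
      by (auto simp: merge_choices_def)
    then show "(\<Sum>S\<in>{S \<in> merge_choices P. card S = k}. g (card S)) = real (card P choose k) * g k"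
      using n_subsets[OF assms, of k] by simp
  qed
  finally show ?thesis .
qed

section \<open>Rates of the coalescent\<close>

locale Lambda_measure =
  fixes L :: "real measure"
  assumes finite_Lambda: "finite_measure L"
    and sets_Lambda: "sets L = sets borel"
    and Lambda_outside: "emeasure L (UNIV - {0..1}) = 0"
    and Lambda_nonzero: "emeasure L {0..1} \<noteq> 0"

sublocale Lambda_measure \<subseteq> finite_measure L
  by (rule finite_Lambda)

context Lambda_measure
begin

lemma space_Lambda: "space L = UNIV"
  using sets_eq_imp_space_eq[OF sets_Lambda] by simp

lemma borel_measurable_Lambda: "f \<in> borel_measurable borel \<Longrightarrow> f \<in> borel_measurable L"
  using measurable_cong_sets[OF sets_Lambda refl, of borel] by metis

lemma AE_unit_interval: "AE p in L. 0 \<le> p \<and> p \<le> 1"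
  by (rule AE_I'[of "UNIV - {0..1}"]) (auto simp: null_sets_def sets_Lambda Lambda_outside space_Lambda)

definition total_mass :: real where
  "total_mass = measure L UNIV"

lemma total_mass_pos: "0 < total_mass"
proof -
  have "measure L {0..1} \<noteq> 0"
    using Lambda_nonzero emeasure_eq_measure by (metis ennreal_0)
  moreover have "measure L {0..1} \<le> total_mass"
    unfolding total_mass_def by (rule finite_measure_mono) (auto simp: sets_Lambda)
  ultimately show ?thesis using measure_nonneg[of L "{0..1}"] by linarith
qed

lemma integrable_Beta_kernel: "integrable L (\<lambda>p. p ^ a * (1 - p) ^ c)"
proof (rule integrable_const_bound[where B=1])
  show "AE p in L. norm (p ^ a * (1 - p) ^ c) \<le> 1"
    using AE_unit_interval
    by eventually_elim (auto simp: abs_mult power_abs intro!: mult_le_one power_le_one)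
qed (rule borel_measurable_Lambda, measurable)

lemma lam_nonneg: "0 \<le> lam L b k"
  unfolding lam_def by (rule integral_nonneg_AE) (use AE_unit_interval in eventually_elim, auto)

lemma sum_lam_eq_integral:
  "(\<Sum>k\<in>A. c k * lam L b k) = (\<integral>p. (\<Sum>k\<in>A. c k * (p ^ (k - 2) * (1 - p) ^ (b - k))) \<partial>L)"
  unfolding lam_def
  using integral_sum[where I=A and f="\<lambda>k p. c k * (p ^ (k - 2) * (1 - p) ^ (b - k))"]
  by (simp add: integrable_Beta_kernel)

end

lemma binomial_shift_ge: "(n + 1) * (n choose j) \<le> (n + 2 choose (j + 2)) * (j + 1)"
proof (cases "j \<le> n")
  case True
  have "(n + 2) * (n + 1 choose (j + 1)) = (n + 2 choose (j + 2)) * (j + 2)"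
    using Suc_times_binomial_eq[of "n + 1" "j + 1"] by simp
  moreover have "(n + 1) * (n choose j) = (n + 1 choose (j + 1)) * (j + 1)"
    using Suc_times_binomial_eq[of n j] by simp
  ultimately have "(n + 1) * (n choose j) * (n + 2) = (n + 2 choose (j + 2)) * (j + 1) * (j + 2)"
    by (metis mult.commute mult.left_commute)
  moreover have "(n + 1) * (n choose j) * (j + 2) \<le> (n + 1) * (n choose j) * (n + 2)"
    using True by simp
  ultimately have "(n + 1) * (n choose j) * (j + 2) \<le> (n + 2 choose (j + 2)) * (j + 1) * (j + 2)"
    by (simp only:)
  then show ?thesis by (rule mult_right_le_imp_le) simp
qed (simp add: binomial_eq_0)

text \<open>Compare term by term with \<open>(b - 1)\<close> times the binomial distribution \<open>Bin(b - 2, p)\<close>.\<close>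
lemma binomial_blocks_lost_ge:
  fixes p :: real
  assumes p: "0 \<le> p" "p \<le> 1" and b: "2 \<le> b"
  shows "real b - 1 \<le> (\<Sum>k=2..b. real (b choose k) * (p ^ (k - 2) * (1 - p) ^ (b - k)) * (real k - 1))"
proof -
  obtain n where n: "b = n + 2" using b by (metis add.commute le_iff_add)
  define F where "F k = real (b choose k) * (p ^ (k - 2) * (1 - p) ^ (b - k)) * (real k - 1)" for k
  have "real b - 1 = (\<Sum>j=0..n. (real n + 1) * (real (n choose j) * p ^ j * (1 - p) ^ (n - j)))"
    using binomial_ring[of p "1 - p" n] n by (simp add: sum_distrib_left[symmetric] atLeast0AtMost)
  also have "\<dots> \<le> (\<Sum>j=0..n. F (j + 2))"
  proof (rule sum_mono)
    fix j
    have "real ((n + 1) * (n choose j)) \<le> real ((n + 2 choose (j + 2)) * (j + 1))"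
      using binomial_shift_ge by (rule of_nat_mono)
    then have "(real n + 1) * real (n choose j) \<le> real (n + 2 choose (j + 2)) * (real j + 1)"
      by (simp only: of_nat_mult of_nat_add of_nat_1)
    from mult_right_mono[OF this, of "p ^ j * (1 - p) ^ (n - j)"]
    show "(real n + 1) * (real (n choose j) * p ^ j * (1 - p) ^ (n - j)) \<le> F (j + 2)"
      using p by (simp add: F_def n algebra_simps del: binomial_Suc_Suc)
  qed
  also have "\<dots> = (\<Sum>k=0+2..n+2. F k)"
    by (rule sum.shift_bounds_cl_nat_ivl[symmetric])
  finally show ?thesis by (simp only: F_def n add_0)
qed

context Lambda_measure
begin

lemma blocks_lost_rate_ge:
  assumes b: "2 \<le> b"
  shows "(real b - 1) * total_mass \<le> (\<Sum>k=2..b. real (b choose k) * lam L b k * (real k - 1))"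
proof -
  have "(\<Sum>k=2..b. real (b choose k) * lam L b k * (real k - 1))
      = (\<Sum>k=2..b. (real (b choose k) * (real k - 1)) * lam L b k)"
    by (simp add: mult_ac)
  also have "\<dots> = (\<integral>p. (\<Sum>k=2..b. (real (b choose k) * (real k - 1)) * (p ^ (k - 2) * (1 - p) ^ (b - k))) \<partial>L)"
    by (rule sum_lam_eq_integral)
  also have "\<dots> \<ge> (\<integral>p. (real b - 1) \<partial>L)"
  proof (rule integral_mono_AE)
    show "integrable L (\<lambda>p. real b - 1)" by simp
    show "integrable L (\<lambda>p. \<Sum>k = 2..b. real (b choose k) * (real k - 1) * (p ^ (k - 2) * (1 - p) ^ (b - k)))"
      by (auto intro!: integrable_Beta_kernel integrable_mult_right)
    show "AE p in L. real b - 1 \<le> (\<Sum>k = 2..b. real (b choose k) * (real k - 1) * (p ^ (k - 2) * (1 - p) ^ (b - k)))"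
      using AE_unit_interval
    proof eventually_elim
      case (elim p)
      then show ?case using binomial_blocks_lost_ge[of p b] b by (simp add: mult_ac)
    qed
  qed
  also have "(\<integral>p. (real b - 1) \<partial>L) = (real b - 1) * total_mass"
    by (simp add: total_mass_def space_Lambda)
  finally show ?thesis .
qed

lemma total_mass_le_lamtot:
  assumes b: "2 \<le> b"
  shows "total_mass \<le> lamtot L b"
proof -
  have "(real b - 1) * total_mass \<le> (\<Sum>k=2..b. real (b choose k) * lam L b k * (real k - 1))"
    by (rule blocks_lost_rate_ge[OF b])
  also have "\<dots> \<le> (\<Sum>k=2..b. real (b choose k) * lam L b k * (real b - 1))"
    by (rule sum_mono) (auto intro!: mult_left_mono lam_nonneg)
  also have "\<dots> = (real b - 1) * lamtot L b"
    by (simp add: lamtot_def sum_distrib_left mult_ac)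
  finally show ?thesis using b by simp
qed

lemma lamtot_pos: "2 \<le> b \<Longrightarrow> 0 < lamtot L b"
  using total_mass_le_lamtot total_mass_pos by (meson less_le_trans)

end

section \<open>The jump chain\<close>

lemma measure_pmf_prob_bind:
  "measure_pmf.prob (bind_pmf M f) X = (\<integral>x. measure_pmf.prob (f x) X \<partial>M)"
  unfolding measure_pmf_bind
  by (rule measure_pmf.measure_bind[where N="count_space UNIV"])
     (auto simp: space_subprob_algebra measure_pmf.prob_space_axioms
           intro!: measurable_pmf_measure2 prob_space_imp_subprob_space)

definition misses_window :: "nat \<Rightarrow> nat \<Rightarrow> nat set set list set" where
  "misses_window lo hi = {xs. \<forall>P\<in>set xs. card P \<notin> {lo<..hi}}"

context Lambda_measure
begin

lemma expectation_step:
  assumes P: "finite P" "2 \<le> card P"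
  shows "measure_pmf.expectation (step L P) f
     = (\<Sum>S\<in>merge_choices P. f (merge P S) * (lam L (card P) (card S) / lamtot L (card P)))"
proof -
  define w where "w S = (if S \<subseteq> P \<and> 2 \<le> card S then lam L (card P) (card S) / lamtot L (card P) else 0)"
    for S
  have pos: "0 < lamtot L (card P)" using lamtot_pos P by simp
  have w_nonneg: "0 \<le> w S" for S unfolding w_def using pos lam_nonneg by auto
  have "(\<Sum>S\<in>merge_choices P. w S) = (\<Sum>S\<in>merge_choices P. lam L (card P) (card S) / lamtot L (card P))"
    by (rule sum.cong) (auto simp: w_def merge_choices_def)
  also have "\<dots> = 1"
    using sum_merge_choices_by_card[OF P(1), of "\<lambda>k. lam L (card P) k / lamtot L (card P)"] pos
    by (simp add: lamtot_def sum_divide_distrib[symmetric])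
  finally have sum_w: "(\<Sum>S\<in>merge_choices P. w S) = 1" .
  have "(\<integral>\<^sup>+S. ennreal (w S) \<partial>count_space UNIV) = (\<Sum>S\<in>merge_choices P. ennreal (w S))"
    by (rule nn_integral_count_space') (auto simp: finite_merge_choices P w_def merge_choices_def)
  also have "\<dots> = 1"
    using sum_w by (simp add: sum_ennreal w_nonneg)
  finally have "(\<integral>\<^sup>+S. ennreal (w S) \<partial>count_space UNIV) = 1" .
  note w_pmf = pmf_embed_pmf[OF w_nonneg this] set_embed_pmf[OF w_nonneg this]
  have "measure_pmf.expectation (step L P) f = measure_pmf.expectation (embed_pmf w) (\<lambda>S. f (merge P S))"
    using P unfolding step_def w_def by simp
  also have "\<dots> = (\<Sum>S\<in>merge_choices P. f (merge P S) * pmf (embed_pmf w) S)"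
    by (rule integral_measure_pmf_real)
       (auto simp: finite_merge_choices P w_pmf w_def merge_choices_def split: if_splits)
  also have "\<dots> = (\<Sum>S\<in>merge_choices P. f (merge P S) * (lam L (card P) (card S) / lamtot L (card P)))"
    by (rule sum.cong) (auto simp: w_pmf w_def merge_choices_def)
  finally show ?thesis .
qed

lemma prob_path_Suc:
  assumes "finite P" "2 \<le> card P"
  shows "measure_pmf.prob (path L (Suc j) P) X
     = (\<Sum>S\<in>merge_choices P. measure_pmf.prob (path L j (merge P S)) (Cons P -` X)
                               * (lam L (card P) (card S) / lamtot L (card P)))"
  by (simp add: measure_pmf_prob_bind expectation_step[OF assms])

lemma prob_path_Suc_le:
  fixes W :: "nat \<Rightarrow> real"
  assumes P: "finite P" "2 \<le> card P"
    and step: "\<And>S. S \<in> merge_choices P \<Longrightarrow>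
      measure_pmf.prob (path L j (merge P S)) (Cons P -` X) \<le> W (card P - card S + 1)"
  shows "measure_pmf.prob (path L (Suc j) P) X
    \<le> (\<Sum>k=2..card P. real (card P choose k) * lam L (card P) k * W (card P - k + 1)) / lamtot L (card P)"
proof -
  have pos: "0 < lamtot L (card P)" using lamtot_pos P(2) .
  have "measure_pmf.prob (path L (Suc j) P) X
      \<le> (\<Sum>S\<in>merge_choices P. W (card P - card S + 1) * (lam L (card P) (card S) / lamtot L (card P)))"
    unfolding prob_path_Suc[OF P] by (intro sum_mono mult_right_mono step) (use lam_nonneg pos in auto)
  also have "\<dots> = (\<Sum>k=2..card P. real (card P choose k) * lam L (card P) k * W (card P - k + 1))
      / lamtot L (card P)"
    using sum_merge_choices_by_card[OF P(1), of "\<lambda>k. W (card P - k + 1) * (lam L (card P) k / lamtot L (card P))"]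
    by (simp add: sum_divide_distrib mult_ac)
  finally show ?thesis .
qed

text \<open>A supermartingale criterion. No condition is needed inside the window \<open>{lo<..hi}\<close>: a path
  reaching it does not miss it.\<close>
lemma prob_path_misses_window_le:
  fixes W :: "nat \<Rightarrow> real"
  assumes lo: "1 \<le> lo" "lo \<le> hi"
    and W_below: "\<And>b. b \<le> lo \<Longrightarrow> 1 \<le> W b" and W_nonneg: "\<And>b. 0 \<le> W b"
    and W_super: "\<And>b. hi < b \<Longrightarrow>
      (\<Sum>k=2..b. real (b choose k) * lam L b k * W (b - k + 1)) \<le> lamtot L b * W b"
    and A: "finite A"
  shows "partition_on A P \<Longrightarrow> card P \<le> j + 1 \<Longrightarrow>
    measure_pmf.prob (path L j P) (misses_window lo hi) \<le> W (card P)"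
proof (induction j arbitrary: P)
  case 0
  then have "1 \<le> W (card P)" using lo by (intro W_below) simp
  then show ?case using measure_pmf.prob_le_1[of "path L 0 P" "misses_window lo hi"] by linarith
next
  case (Suc j)
  have finP: "finite P" using finite_elements[OF A Suc.prems(1)] .
  consider "card P \<le> lo" | "card P \<in> {lo<..hi}" | "hi < card P" by fastforce
  then show ?case
  proof cases
    case 1
    then have "1 \<le> W (card P)" by (rule W_below)
    then show ?thesis
      using measure_pmf.prob_le_1[of "path L (Suc j) P" "misses_window lo hi"] by linarith
  next
    case 2
    then have "Cons P -` misses_window lo hi = {}" by (auto simp: misses_window_def)
    then show ?thesis using W_nonneg 2 lo prob_path_Suc[OF finP] by simp
  next
    case 3
    have P2: "2 \<le> card P" using 3 lo by linarith
    have "measure_pmf.prob (path L (Suc j) P) (misses_window lo hi)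
        \<le> (\<Sum>k=2..card P. real (card P choose k) * lam L (card P) k * W (card P - k + 1)) / lamtot L (card P)"
    proof (rule prob_path_Suc_le[OF finP P2])
      fix S assume "S \<in> merge_choices P"
      then have S: "S \<subseteq> P" "S \<noteq> {}" "2 \<le> card S" by (auto simp: merge_choices_def)
      have card: "card (merge P S) = card P - card S + 1"
        using card_merge[OF Suc.prems(1) A S(1,2)] .
      then have "card (merge P S) \<le> j + 1"
        using S(3) Suc.prems(2) by arith
      from Suc.IH[OF partition_on_merge[OF Suc.prems(1) S(1,2)] this]
      show "measure_pmf.prob (path L j (merge P S)) (Cons P -` misses_window lo hi) \<le> W (card P - card S + 1)"
        using 3 by (simp add: card misses_window_def vimage_def)
    qed
    also have "\<dots> \<le> W (card P)"
      using W_super[OF 3] lamtot_pos[OF P2] by (simp add: divide_le_eq mult_ac)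
    finally show ?thesis .
  qed
qed

end

section \<open>Rate of jumping below the window\<close>

text \<open>A merger of \<open>k\<close> of \<open>c\<close> blocks leaves \<open>c - k + 1\<close>; integrated against \<open>\<Lambda>\<close>, this density gives
  the rate of jumping from \<open>c\<close> to at most \<open>m\<close> blocks.\<close>
definition drop_density :: "nat \<Rightarrow> nat \<Rightarrow> real \<Rightarrow> real" where
  "drop_density m c p =
     (\<Sum>k=2..c. (if c - k + 1 \<le> m then real (c choose k) else 0) * (p ^ (k - 2) * (1 - p) ^ (c - k)))"

text \<open>If \<open>c > 2 m\<close>, falling to at most \<open>m\<close> blocks needs a merger of more than \<open>c / 2\<close> blocks.\<close>
lemma drop_density_small_p:
  fixes p :: real
  assumes p: "0 \<le> p" "p \<le> 1/16" and c: "2 * m < c"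
  shows "drop_density m c p \<le> 16 / 2 ^ c"
proof -
  have term_le: "p ^ (k - 2) * (1 - p) ^ (c - k) \<le> 16 / 4 ^ c"
    if k: "k \<in> {2..c}" "c - k + 1 \<le> m" for k
  proof -
    obtain d where d: "c = d + 2" using k by (metis add.commute atLeastAtMost_iff le_iff_add order_trans)
    have "p ^ (k - 2) * (1 - p) ^ (c - k) \<le> ((1/4) ^ 2) ^ (k - 2) * 1"
      using p by (intro mult_mono power_mono power_le_one) (auto simp: power2_eq_square)
    also have "\<dots> = (1/4) ^ (2 * (k - 2))" by (simp only: power_mult mult_1_right)
    also have "\<dots> \<le> (1/4) ^ (c - 2)" using c k by (intro power_decreasing) auto
    also have "\<dots> = 16 / 4 ^ c" by (simp add: d power_add power_one_over)
    finally show ?thesis .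
  qed
  have "drop_density m c p \<le> (\<Sum>k=2..c. real (c choose k) * (16 / 4 ^ c))"
    unfolding drop_density_def
  proof (rule sum_mono)
    fix k assume k: "k \<in> {2..c}"
    show "(if c - k + 1 \<le> m then real (c choose k) else 0) * (p ^ (k - 2) * (1 - p) ^ (c - k))
        \<le> real (c choose k) * (16 / 4 ^ c)"
      using mult_left_mono[OF term_le[OF k], of "real (c choose k)"] by auto
  qed
  also have "\<dots> \<le> (\<Sum>k\<le>c. real (c choose k)) * (16 / 4 ^ c)"
    unfolding sum_distrib_right[symmetric] by (intro mult_right_mono sum_mono2) auto
  also have "\<dots> = 2 ^ c * (16 / (2 ^ c * 2 ^ c))"
    using choose_row_sum[of c] by (simp flip: of_nat_sum power_mult_distrib)
  also have "\<dots> = 16 / 2 ^ c" by simp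
  finally show ?thesis .
qed

lemma sum_binomial_Suc_le:
  fixes p q :: real
  assumes "0 \<le> p" "0 < q" "p + q = 1"
  shows "(\<Sum>k\<le>c. real (Suc c choose k) * p ^ k * q ^ (c - k)) \<le> 1 / q"
proof -
  have "(\<Sum>k\<le>c. real (Suc c choose k) * p ^ k * q ^ (c - k)) * q
      = (\<Sum>k\<le>c. real (Suc c choose k) * p ^ k * q ^ (Suc c - k))"
    by (auto simp: sum_distrib_right Suc_diff_le intro!: sum.cong)
  also have "\<dots> \<le> (\<Sum>k\<le>Suc c. real (Suc c choose k) * p ^ k * q ^ (Suc c - k))"
    by (rule sum_mono2) (use assms in auto)
  also have "\<dots> = 1"
    using binomial_ring[of p q "Suc c"] assms by simp
  finally show ?thesis using assms by (simp add: field_simps)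
qed

lemma binomial_Suc_absorb_div:
  assumes "k \<le> c"
  shows "real (c choose k) / (real c + 1 - real k) = real (Suc c choose k) / (real c + 1)"
proof -
  have "(Suc c - k) * (Suc c choose k) = Suc c * (c choose k)"
    using binomial_absorb_comp[of "Suc c" k] by simp
  then have "real (Suc c - k) * real (Suc c choose k) = real (Suc c) * real (c choose k)"
    by (metis of_nat_mult)
  moreover have "real (Suc c - k) = real c + 1 - real k" using assms by (simp add: of_nat_diff)
  moreover have "real c + 1 - real k \<noteq> 0" "real c + 1 \<noteq> 0" using assms by auto
  ultimately show ?thesis by (simp add: frac_eq_eq mult_ac)
qed

text \<open>A Markov-type bound: on the event, \<open>m / (c + 1 - k) \<ge> 1\<close>.\<close>
lemma binomial_upper_tail_le:
  fixes p q :: real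
  assumes p: "0 \<le> p" "0 < q" "p + q = 1"
  shows "(\<Sum>k=2..c. (if c - k + 1 \<le> m then real (c choose k) else 0) * (p ^ k * q ^ (c - k)))
    \<le> real m / ((real c + 1) * q)"
proof -
  have "(\<Sum>k=2..c. (if c - k + 1 \<le> m then real (c choose k) else 0) * (p ^ k * q ^ (c - k)))
      \<le> (\<Sum>k\<le>c. real (c choose k) / (real c + 1 - real k) * (real m * (p ^ k * q ^ (c - k))))"
  proof (rule order_trans[OF sum_mono sum_mono2])
    fix k assume k: "k \<in> {2..c}"
    have "0 \<le> real (c choose k) * p ^ k * q ^ (c - k)" using p by simp
    moreover have "c - k + 1 \<le> m \<Longrightarrow> 1 \<le> real m / (real c + 1 - real k)"
      using k by (simp add: le_divide_eq of_nat_diff)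
    moreover have "0 \<le> real m / (real c + 1 - real k)" using k by simp
    ultimately show "(if c - k + 1 \<le> m then real (c choose k) else 0) * (p ^ k * q ^ (c - k))
       \<le> real (c choose k) / (real c + 1 - real k) * (real m * (p ^ k * q ^ (c - k)))"
      using mult_left_mono[of 1 "real m / (real c + 1 - real k)" "real (c choose k) * p ^ k * q ^ (c - k)"]
        mult_nonneg_nonneg[of "real (c choose k) * p ^ k * q ^ (c - k)" "real m / (real c + 1 - real k)"]
      by (cases "c - k + 1 \<le> m") (simp_all add: mult_ac)
  qed (use p in auto)
  also have "\<dots> = real m / (real c + 1) * (\<Sum>k\<le>c. real (Suc c choose k) * p ^ k * q ^ (c - k))"
    unfolding sum_distrib_left by (rule sum.cong) (simp_all add: binomial_Suc_absorb_div mult_ac)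
  also have "\<dots> \<le> real m / (real c + 1) * (1 / q)"
    by (intro mult_left_mono sum_binomial_Suc_le p) auto
  finally show ?thesis by simp
qed

lemma drop_density_large_p:
  fixes p :: real
  assumes p: "1/16 \<le> p" "p < 1"
  shows "drop_density m c p \<le> 256 * min 1 (real m / ((real c + 1) * (1 - p)))"
proof -
  define T where
    "T = (\<Sum>k=2..c. (if c - k + 1 \<le> m then real (c choose k) else 0) * (p ^ k * (1 - p) ^ (c - k)))"
  have "drop_density m c p \<le> 256 * T"
    unfolding drop_density_def T_def sum_distrib_left
  proof (rule sum_mono)
    fix k assume "k \<in> {2..c}"
    then obtain j where "k = j + 2" by (metis add.commute atLeastAtMost_iff le_iff_add)
    then have "p ^ k = p ^ (k - 2) * p\<^sup>2" by (simp add: power_add power2_eq_square)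
    moreover have "1 \<le> 256 * p\<^sup>2" using power_mono[OF p(1), of 2] by (simp add: power_divide)
    ultimately have "p ^ (k - 2) * 1 \<le> 256 * p ^ k"
      using p mult_left_mono[of 1 "256 * p\<^sup>2" "p ^ (k - 2)"] by (simp add: mult_ac)
    then have "p ^ (k - 2) * (1 - p) ^ (c - k) \<le> 256 * p ^ k * (1 - p) ^ (c - k)"
      using p by (intro mult_right_mono) auto
    from mult_left_mono[OF this, of "real (c choose k)"]
    show "(if c - k + 1 \<le> m then real (c choose k) else 0) * (p ^ (k - 2) * (1 - p) ^ (c - k))
        \<le> 256 * ((if c - k + 1 \<le> m then real (c choose k) else 0) * (p ^ k * (1 - p) ^ (c - k)))"
      using p by (cases "c - k + 1 \<le> m") (simp_all add: mult_ac)
  qed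
  moreover have "T \<le> (\<Sum>k\<le>c. real (c choose k) * p ^ k * (1 - p) ^ (c - k))"
    unfolding T_def by (rule order_trans[OF sum_mono sum_mono2]) (use p in auto)
  moreover have "(\<Sum>k\<le>c. real (c choose k) * p ^ k * (1 - p) ^ (c - k)) = 1"
    using binomial_ring[of p "1 - p" c] by simp
  moreover have "T \<le> real m / ((real c + 1) * (1 - p))"
    unfolding T_def using p by (intro binomial_upper_tail_le) auto
  ultimately show ?thesis by simp
qed

definition drop_density_majorant :: "nat \<Rightarrow> nat \<Rightarrow> real \<Rightarrow> real" where
  "drop_density_majorant m c p =
     (if p < 1/16 then 16 / 2 ^ c else 256 * min 1 (real m / (real c * (1 - p))))"

lemma drop_density_le_majorant:
  assumes p: "0 \<le> p" "p < 1" and c: "2 * m < c"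
  shows "drop_density m c p \<le> drop_density_majorant m c p"
proof (cases "p < 1/16")
  case False
  have "real m / ((real c + 1) * (1 - p)) \<le> real m / (real c * (1 - p))"
    using p c by (intro divide_left_mono mult_pos_pos mult_right_mono) auto
  then show ?thesis
    using drop_density_large_p[of p m c] False p
    unfolding drop_density_majorant_def by (smt (verit) min.mono)
qed (use drop_density_small_p[of p m c] p c in \<open>simp add: drop_density_majorant_def\<close>)

lemma drop_density_majorant_bounds:
  assumes "p < 1"
  shows "0 \<le> drop_density_majorant m c p" "drop_density_majorant m c p \<le> 256"
proof -
  have "16 / (2::real) ^ c \<le> 16" by (simp add: divide_le_eq)
  then show "0 \<le> drop_density_majorant m c p" "drop_density_majorant m c p \<le> 256"
    using assms by (auto simp: drop_density_majorant_def)
qed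

lemma drop_density_majorant_antimono:
  assumes p: "p < 1" and c: "1 \<le> c" "c \<le> c'"
  shows "drop_density_majorant m c' p \<le> drop_density_majorant m c p"
proof -
  have "(2::real) ^ c \<le> 2 ^ c'" using c by (intro power_increasing) auto
  moreover have "real m / (real c' * (1 - p)) \<le> real m / (real c * (1 - p))"
    using p c by (intro divide_left_mono mult_pos_pos mult_right_mono) auto
  ultimately show ?thesis
    by (auto simp: drop_density_majorant_def intro: divide_left_mono min.mono)
qed

section \<open>Tail sums of the drop rates\<close>

lemma sum_inverse_squares_le:
  assumes "1 \<le> N"
  shows "(\<Sum>c=N+1..M. 1 / (real c)\<^sup>2) \<le> 1 / real N"
proof (cases "N \<le> M")
  case True
  then have "(\<Sum>c=N+1..M. 1 / (real c)\<^sup>2) \<le> 1 / real N - 1 / real M"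
  proof (induction M rule: dec_induct)
    case (step n)
    have "1 / (real (Suc n))\<^sup>2 \<le> 1 / (real n * real (Suc n))"
      unfolding power2_eq_square by (rule divide_left_mono) (use step assms in auto)
    also have "\<dots> = 1 / real n - 1 / real (Suc n)"
      using step assms by (simp add: field_simps)
    finally show ?case using step by (simp add: sum.cl_ivl_Suc)
  qed simp
  moreover have "0 \<le> 1 / real M" by simp
  ultimately show ?thesis by linarith
qed simp

lemma sum_inverse_le_ln:
  assumes "1 \<le> N" "N \<le> M"
  shows "(\<Sum>c=N+1..M. 1 / real c) \<le> ln (real M) - ln (real N)"
  using assms(2)
proof (induction M rule: dec_induct)
  case (step n)
  have n: "1 \<le> real n" using step assms by simp
  have "ln (real n) - ln (real (Suc n)) = ln (real n / real (Suc n))"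
    using n by (simp add: ln_div)
  also have "\<dots> \<le> real n / real (Suc n) - 1"
    by (rule ln_le_minus_one) (use n in simp)
  also have "\<dots> = - (1 / real (Suc n))"
    using n by (simp add: field_simps)
  finally show ?case using step by (simp add: sum.cl_ivl_Suc)
qed simp

lemma sum_inverse_powers_of_two_le: "(\<Sum>c=N+1..M. 1 / (2::real) ^ c) \<le> 1 / 2 ^ N"
proof (cases "N \<le> M")
  case True
  then have "(\<Sum>c=N+1..M. 1 / (2::real) ^ c) \<le> 1 / 2 ^ N - 1 / 2 ^ M"
    by (induction M rule: dec_induct) (auto simp: sum.cl_ivl_Suc)
  moreover have "0 \<le> 1 / (2::real) ^ M" by simp
  ultimately show ?thesis by linarith
qed simp

text \<open>Split at \<open>N\<close>: the terms are at most \<open>1 / c\<close> up to \<open>N\<close> and at most \<open>x / c\<^sup>2\<close> beyond.\<close>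
lemma sum_min_inverse_le:
  fixes x :: real
  assumes N: "1 \<le> a" "a \<le> N" and x: "0 \<le> x"
  shows "(\<Sum>c=a+1..b. min 1 (x / real c) / real c) \<le> ln (real N) - ln (real a) + x / real N"
proof -
  have "(\<Sum>c=a+1..b. min 1 (x / real c) / real c)
      \<le> (\<Sum>c=a+1..b. (if c \<le> N then 1 / real c else 0)) + (\<Sum>c=a+1..b. (if N < c then x * (1 / (real c)\<^sup>2) else 0))"
    unfolding sum.distrib[symmetric]
  proof (rule sum_mono)
    fix c assume "c \<in> {a+1..b}"
    then have "0 \<le> real c" by simp
    then have "min 1 (x / real c) / real c \<le> 1 / real c"
      and "min 1 (x / real c) / real c \<le> (x / real c) / real c"
      by (intro divide_right_mono; simp)+
    then have "min 1 (x / real c) / real c \<le> 1 / real c"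
      and "min 1 (x / real c) / real c \<le> x * (1 / (real c)\<^sup>2)"
      by (simp_all add: power2_eq_square)
    then show "min 1 (x / real c) / real c
        \<le> (if c \<le> N then 1 / real c else 0) + (if N < c then x * (1 / (real c)\<^sup>2) else 0)"
      by auto
  qed
  also have "(\<Sum>c=a+1..b. (if c \<le> N then 1 / real c else 0)) = (\<Sum>c\<in>{a+1..b} \<inter> {c. c \<le> N}. 1 / real c)"
    by (simp only: sum.inter_restrict[OF finite_atLeastAtMost] mem_Collect_eq)
  also have "\<dots> \<le> (\<Sum>c=a+1..N. 1 / real c)"
    by (rule sum_mono2) auto
  also have "\<dots> \<le> ln (real N) - ln (real a)"
    by (rule sum_inverse_le_ln[OF N])
  also have "(\<Sum>c=a+1..b. (if N < c then x * (1 / (real c)\<^sup>2) else 0))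
      = (\<Sum>c\<in>{a+1..b} \<inter> {c. N < c}. x * (1 / (real c)\<^sup>2))"
    by (simp only: sum.inter_restrict[OF finite_atLeastAtMost] mem_Collect_eq)
  also have "\<dots> \<le> (\<Sum>c=N+1..b. x * (1 / (real c)\<^sup>2))"
    by (rule sum_mono2) (use x in auto)
  also have "\<dots> \<le> x / real N"
    using mult_left_mono[OF sum_inverse_squares_le[of N b] x] N by (simp add: sum_distrib_left)
  finally show ?thesis by simp
qed

definition tail_sum_majorant :: "nat \<Rightarrow> real \<Rightarrow> real" where
  "tail_sum_majorant K q = (if 1 \<le> real K * q then 1 / (real K * q) else ln (1 / (real K * q)) + 2)"

lemma sum_min_inverse_le_tail_sum_majorant:
  fixes q :: real
  assumes q: "0 < q" and m: "1 \<le> m" and K: "2 \<le> K"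
  shows "(\<Sum>c=K*m+1..b. min 1 (real m / (real c * q)) / real c) \<le> tail_sum_majorant K q"
proof -
  define x where "x = real m / q"
  have Km: "1 \<le> K * m" using m K by (simp add: one_le_mult_iff)
  have terms: "min 1 (real m / (real c * q)) = min 1 (x / real c)" for c
    by (simp add: x_def field_simps)
  show ?thesis
  proof (cases "1 \<le> real K * q")
    case True
    then have "x / real (K * m) = 1 / (real K * q)" using m q by (simp add: x_def field_simps)
    then show ?thesis
      using sum_min_inverse_le[OF Km order_refl, of x b] True q unfolding terms
      by (simp add: x_def tail_sum_majorant_def)
  next
    case False
    define N where "N = nat \<lfloor>x\<rfloor>"
    have "0 \<le> x" using q by (simp add: x_def)
    then have N: "real N \<le> x" "x < real N + 1"
      using floor_correct[of x] by (simp_all add: N_def)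
    have "real (K * m) \<le> x"
      using False q m by (simp add: x_def field_simps)
    then have KmN: "K * m \<le> N" by (simp add: N_def le_nat_floor)
    then have N1: "1 \<le> real N" using Km by linarith
    have "1 / (real K * q) = x / real (K * m)"
      using m by (simp add: x_def field_simps)
    then have "ln (1 / (real K * q)) = ln x - ln (real (K * m))"
      using N1 N Km by (simp add: ln_div)
    moreover have "ln (real N) \<le> ln x" using N N1 by simp
    ultimately have "ln (real N) - ln (real (K * m)) \<le> ln (1 / (real K * q))" by linarith
    moreover have "x / real N \<le> 2"
      using N N1 by (simp add: divide_le_eq)
    ultimately show ?thesis
      using sum_min_inverse_le[OF Km KmN, of x b] False q unfolding terms
      by (simp add: x_def tail_sum_majorant_def)
  qed
qed

lemma tail_sum_majorant_bounds:
  assumes q: "0 < q" "q \<le> 1" and K: "1 \<le> K"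
  shows "0 \<le> tail_sum_majorant K q" "tail_sum_majorant K q \<le> 2 + \<bar>ln q\<bar>"
proof -
  show "0 \<le> tail_sum_majorant K q"
  proof (cases "1 \<le> real K * q")
    case False
    then have "1 < 1 / (real K * q)" using q K by (simp add: field_simps)
    then show ?thesis using False ln_gt_zero by (simp add: tail_sum_majorant_def)
  qed (use q in \<open>simp add: tail_sum_majorant_def\<close>)
  show "tail_sum_majorant K q \<le> 2 + \<bar>ln q\<bar>"
  proof (cases "1 \<le> real K * q")
    case True
    then have "tail_sum_majorant K q \<le> 1" by (simp add: tail_sum_majorant_def)
    then show ?thesis using abs_ge_zero[of "ln q"] by linarith
  next
    case False
    have "ln (1 / (real K * q)) = - ln (real K) - ln q" using q K by (simp add: ln_div ln_mult)
    moreover have "0 \<le> ln (real K)" using K by simp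
    ultimately show ?thesis using False by (simp add: tail_sum_majorant_def)
  qed
qed

definition miss_density :: "nat \<Rightarrow> real \<Rightarrow> real" where
  "miss_density K p = (if p < 1/16 then 32 / 2 ^ K
     else 256 * (min 1 (1 / (real K * (1 - p))) + tail_sum_majorant K (1 - p)))"

lemma miss_density_small_p:
  assumes "p < 1/16" and m: "1 \<le> m"
  shows "drop_density_majorant m (K*m+1) p + (\<Sum>c=K*m+1..b. drop_density_majorant m c p / real c)
    \<le> miss_density K p"
proof -
  have Km: "K \<le> K * m" using mult_le_mono2[OF m, of K] by simp
  have majorant: "drop_density_majorant m c p = 16 / 2 ^ c" for c
    using assms(1) by (simp add: drop_density_majorant_def)
  have "(\<Sum>c=K*m+1..b. drop_density_majorant m c p / real c) \<le> (\<Sum>c=K*m+1..b. 16 * (1 / 2 ^ c))"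
    by (rule sum_mono) (auto simp: majorant divide_le_eq)
  also have "\<dots> \<le> 16 * (1 / 2 ^ (K * m))"
    unfolding sum_distrib_left[symmetric] by (intro mult_left_mono sum_inverse_powers_of_two_le) auto
  finally have "drop_density_majorant m (K*m+1) p + (\<Sum>c=K*m+1..b. drop_density_majorant m c p / real c)
      \<le> 16 / 2 ^ (K * m + 1) + 16 / 2 ^ (K * m)"
    by (simp add: majorant)
  also have "\<dots> \<le> 16 / 2 ^ K + 16 / 2 ^ K"
    by (intro add_mono divide_left_mono power_increasing) (simp_all add: Km le_SucI)
  finally show ?thesis using assms by (simp add: miss_density_def)
qed

lemma miss_density_large_p:
  assumes p: "1/16 \<le> p" "p < 1" and m: "1 \<le> m" and K: "2 \<le> K"
  shows "drop_density_majorant m (K*m+1) p + (\<Sum>c=K*m+1..b. drop_density_majorant m c p / real c)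
    \<le> miss_density K p"
proof -
  have "real m / (real (K * m + 1) * (1 - p)) \<le> real m / (real (K * m) * (1 - p))"
    using p m K by (intro divide_left_mono mult_pos_pos mult_right_mono) (auto simp: add_pos_nonneg)
  also have "\<dots> = 1 / (real K * (1 - p))" using m by simp
  finally have "drop_density_majorant m (K*m+1) p \<le> 256 * min 1 (1 / (real K * (1 - p)))"
    using p by (auto simp: drop_density_majorant_def intro: min.mono)
  moreover have "(\<Sum>c=K*m+1..b. drop_density_majorant m c p / real c)
      = 256 * (\<Sum>c=K*m+1..b. min 1 (real m / (real c * (1 - p))) / real c)"
    using p by (simp add: drop_density_majorant_def sum_distrib_left)
  moreover have "\<dots> \<le> 256 * tail_sum_majorant K (1 - p)"
    using sum_min_inverse_le_tail_sum_majorant[of "1 - p" m K b] p m K by simp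
  ultimately show ?thesis using p by (simp add: miss_density_def)
qed

lemma miss_density_bounds:
  assumes p: "0 \<le> p" "p < 1" and K: "1 \<le> K"
  shows "0 \<le> miss_density K p" "miss_density K p \<le> 800 + 256 * \<bar>ln (1 - p)\<bar>"
proof -
  have "32 / (2::real) ^ K \<le> 32" by (simp add: divide_le_eq)
  moreover note tail_sum_majorant_bounds[of "1 - p" K]
  moreover have "0 \<le> min 1 (1 / (real K * (1 - p)))" "min 1 (1 / (real K * (1 - p))) \<le> 1"
    using p by auto
  ultimately show "0 \<le> miss_density K p" "miss_density K p \<le> 800 + 256 * \<bar>ln (1 - p)\<bar>"
    using p K by (auto simp: miss_density_def)
qed

lemma norm_miss_density_le:
  assumes "0 \<le> p" "p < 1" "1 \<le> K"
  shows "norm (miss_density K p) \<le> 800 + 256 * \<bar>ln (1 - p)\<bar>"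
  using miss_density_bounds[OF assms] by simp

lemma miss_density_tendsto_0:
  assumes p: "p < 1"
  shows "(\<lambda>K. miss_density K p) \<longlonglongrightarrow> 0"
proof (cases "p < 1/16")
  case True
  have "(\<lambda>K::nat. 32 / 2 ^ K) \<longlonglongrightarrow> (0::real)"
    by real_asymp
  then show ?thesis using True by (simp add: miss_density_def)
next
  case False
  define q where "q = 1 - p"
  have q: "0 < q" using p by (simp add: q_def)
  have lim: "(\<lambda>K::nat. 256 * (min 1 (1 / (real K * q)) + 1 / (real K * q))) \<longlonglongrightarrow> 256 * (min 1 0 + 0)"
    using q by (intro tendsto_intros) real_asymp+
  have "eventually (\<lambda>K. 1 \<le> real K * q) sequentially"
    using q by real_asymp
  then have "eventually (\<lambda>K. 256 * (min 1 (1 / (real K * q)) + 1 / (real K * q)) = miss_density K p) sequentially"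
    by eventually_elim (use False in \<open>simp add: miss_density_def tail_sum_majorant_def q_def\<close>)
  from Lim_transform_eventually[OF lim this] show ?thesis by simp
qed

section \<open>A potential for jumping over the window\<close>

locale Lambda_log_moment = Lambda_measure +
  assumes no_atom_at_one: "emeasure L {1} = 0"
    and log_moment: "(\<integral>\<^sup>+ p. ennreal \<bar>ln (1 - p)\<bar> \<partial>L) < \<infinity>"
begin

lemma AE_below_one: "AE p in L. 0 \<le> p \<and> p < 1"
proof -
  have "AE p in L. p \<noteq> 1"
    by (rule AE_I'[of "{1}"]) (auto simp: null_sets_def sets_Lambda no_atom_at_one space_Lambda)
  with AE_unit_interval show ?thesis by eventually_elim auto
qed

definition drop_rate :: "nat \<Rightarrow> nat \<Rightarrow> real" where
  "drop_rate m c = (\<Sum>k=2..c. (if c - k + 1 \<le> m then real (c choose k) else 0) * lam L c k)"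

definition drop_rate_majorant :: "nat \<Rightarrow> nat \<Rightarrow> real" where
  "drop_rate_majorant m c = (\<integral>p. drop_density_majorant m c p \<partial>L)"

lemma integrable_drop_density_majorant: "integrable L (drop_density_majorant m c)"
proof (rule integrable_const_bound[where B=256])
  show "AE p in L. norm (drop_density_majorant m c p) \<le> 256"
    using AE_below_one by eventually_elim (use drop_density_majorant_bounds in auto)
  show "drop_density_majorant m c \<in> borel_measurable L"
    unfolding drop_density_majorant_def by (rule borel_measurable_Lambda) measurable
qed

lemma drop_rate_le_majorant:
  assumes "2 * m < c"
  shows "drop_rate m c \<le> drop_rate_majorant m c"
proof -
  have "drop_rate m c = (\<integral>p. drop_density m c p \<partial>L)"
    unfolding drop_rate_def drop_density_def by (rule sum_lam_eq_integral)
  also have "\<dots> \<le> drop_rate_majorant m c"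
    unfolding drop_rate_majorant_def
  proof (rule integral_mono_AE[OF _ integrable_drop_density_majorant])
    show "integrable L (drop_density m c)"
      unfolding drop_density_def by (auto intro!: integrable_Beta_kernel)
    show "AE p in L. drop_density m c p \<le> drop_density_majorant m c p"
      using AE_below_one by eventually_elim (simp add: drop_density_le_majorant assms)
  qed
  finally show ?thesis .
qed

lemma drop_rate_majorant_nonneg: "0 \<le> drop_rate_majorant m c"
  unfolding drop_rate_majorant_def
  by (rule integral_nonneg_AE) (use AE_below_one drop_density_majorant_bounds in \<open>auto elim: eventually_mono\<close>)

lemma drop_rate_majorant_antimono: "1 \<le> c \<Longrightarrow> c \<le> c' \<Longrightarrow> drop_rate_majorant m c' \<le> drop_rate_majorant m c"
  unfolding drop_rate_majorant_def
  by (rule integral_mono_AE[OF integrable_drop_density_majorant integrable_drop_density_majorant])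
     (use AE_below_one drop_density_majorant_antimono in \<open>auto elim: eventually_mono\<close>)

text \<open>With the weights \<open>1 / c\<close>, each block lost from \<open>b > K m\<close> blocks lowers the sum by at least
  \<open>drop_rate_majorant m b / b\<close>, and at least \<open>(b - 1) \<Lambda>([0,1])\<close> blocks are lost per unit time;
  the factor \<open>2 / \<Lambda>([0,1])\<close> makes the expected decrease dominate the drop rate. The first term
  pays for jumps that land at or below \<open>K m\<close>.\<close>
definition tail_potential :: "nat \<Rightarrow> nat \<Rightarrow> nat \<Rightarrow> real" where
  "tail_potential m K b = (if b \<le> K * m then 0
     else 2 / total_mass * (drop_rate_majorant m (K*m+1) + (\<Sum>c=K*m+1..b. drop_rate_majorant m c / real c)))"

lemma tail_potential_nonneg: "0 \<le> tail_potential m K b"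
  unfolding tail_potential_def using total_mass_pos drop_rate_majorant_nonneg
  by (auto intro!: mult_nonneg_nonneg add_nonneg_nonneg sum_nonneg divide_nonneg_nonneg)

lemma tail_potential_decrease:
  assumes b: "K * m < b" and k: "2 \<le> k" "k \<le> b"
  shows "(real k - 1) * (2 / total_mass * drop_rate_majorant m b / real b)
    \<le> tail_potential m K b - tail_potential m K (b - k + 1)"
proof -
  define A where "A = 2 / total_mass"
  define R where "R = drop_rate_majorant m"
  have A: "0 < A" using total_mass_pos by (simp add: A_def)
  have R: "0 \<le> R c" for c by (simp add: R_def drop_rate_majorant_nonneg)
  have V_b: "tail_potential m K b = A * (R (K*m+1) + (\<Sum>c=K*m+1..b. R c / real c))"
    using b by (simp add: tail_potential_def A_def R_def)
  show ?thesis
  proof (cases "b - k + 1 \<le> K * m")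
    case True
    have "(real k - 1) / real b \<le> 1" using k by simp
    then have "(real k - 1) / real b * (A * R b) \<le> 1 * (A * R b)"
      using A R by (intro mult_right_mono) auto
    then have "(real k - 1) * (A * R b / real b) \<le> A * R b"
      by (simp add: field_simps)
    also have "\<dots> \<le> A * R (K*m+1)"
      using A b by (intro mult_left_mono) (auto simp: R_def intro: drop_rate_majorant_antimono)
    also have "\<dots> \<le> A * (R (K*m+1) + (\<Sum>c=K*m+1..b. R c / real c))"
      using A R by (intro mult_left_mono add_increasing2 sum_nonneg) auto
    finally show ?thesis using True V_b by (simp add: tail_potential_def A_def R_def)
  next
    case False
    have "(real k - 1) * (A * R b / real b) = A * (\<Sum>c=b-k+2..b. R b / real b)"
      using k by (simp add: of_nat_diff)
    also have "\<dots> \<le> A * (\<Sum>c=b-k+2..b. R c / real c)"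
      using A R by (intro mult_left_mono sum_mono frac_le)
                   (auto simp: R_def intro: drop_rate_majorant_antimono)
    also have "\<dots> = tail_potential m K b - tail_potential m K (b - k + 1)"
    proof -
      have split: "{K*m+1..b} = {K*m+1..b-k+1} \<union> {b-k+2..b}" using False k by auto
      have "(\<Sum>c=K*m+1..b. R c / real c)
          = (\<Sum>c=K*m+1..b-k+1. R c / real c) + (\<Sum>c=b-k+2..b. R c / real c)"
        unfolding split by (rule sum.union_disjoint) auto
      then show ?thesis using False V_b by (simp add: tail_potential_def A_def R_def algebra_simps)
    qed
    finally show ?thesis by (simp add: A_def R_def)
  qed
qed

lemma drop_rate_le_tail_potential_decrease:
  assumes m: "1 \<le> m" and K: "2 \<le> K" and b: "K * m < b"
  shows "drop_rate m b \<le> (\<Sum>k=2..b. real (b choose k) * lam L b k * (tail_potential m K b - tail_potential m K (b - k + 1)))"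
proof -
  define D where "D = 2 / total_mass * drop_rate_majorant m b / real b"
  have "2 * m \<le> K * m" using K by (rule mult_le_mono1)
  then have b2: "2 \<le> b" "2 * m < b" using b m by linarith+
  have "drop_rate m b \<le> drop_rate_majorant m b"
    by (rule drop_rate_le_majorant[OF b2(2)])
  also have "\<dots> \<le> (2 * (real b - 1) / real b) * drop_rate_majorant m b"
  proof -
    have "1 \<le> 2 * (real b - 1) / real b" using b2 by (simp add: field_simps)
    from mult_right_mono[OF this drop_rate_majorant_nonneg[of m b]] show ?thesis by simp
  qed
  also have "\<dots> = (real b - 1) * total_mass * D"
    using b2 total_mass_pos by (simp add: D_def field_simps)
  also have "\<dots> \<le> (\<Sum>k=2..b. real (b choose k) * lam L b k * (real k - 1)) * D"
    using blocks_lost_rate_ge[OF b2(1)] total_mass_pos drop_rate_majorant_nonneg[of m b]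
    by (intro mult_right_mono) (auto simp: D_def)
  also have "\<dots> \<le> (\<Sum>k=2..b. real (b choose k) * lam L b k * (tail_potential m K b - tail_potential m K (b - k + 1)))"
    unfolding sum_distrib_right mult.assoc D_def
    by (intro sum_mono mult_left_mono tail_potential_decrease b) (auto intro: lam_nonneg)
  finally show ?thesis .
qed

definition miss_potential :: "nat \<Rightarrow> nat \<Rightarrow> nat \<Rightarrow> real" where
  "miss_potential m K b = (if b \<le> m then 1 else 0) + tail_potential m K b"

lemma miss_potential_supermartingale:
  assumes m: "1 \<le> m" and K: "2 \<le> K" and b: "K * m < b"
  shows "(\<Sum>k=2..b. real (b choose k) * lam L b k * miss_potential m K (b - k + 1))
    \<le> lamtot L b * miss_potential m K b"
proof -
  have "2 * m \<le> K * m" using K by (rule mult_le_mono1)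
  then have "\<not> b \<le> m" using b m by linarith
  then have "lamtot L b * miss_potential m K b = (\<Sum>k=2..b. real (b choose k) * lam L b k * tail_potential m K b)"
    by (simp add: miss_potential_def lamtot_def sum_distrib_right)
  moreover have "(\<Sum>k=2..b. real (b choose k) * lam L b k * miss_potential m K (b - k + 1))
      = drop_rate m b + (\<Sum>k=2..b. real (b choose k) * lam L b k * tail_potential m K (b - k + 1))"
    unfolding drop_rate_def sum.distrib[symmetric]
    by (rule sum.cong) (auto simp: miss_potential_def algebra_simps)
  ultimately show ?thesis
    using drop_rate_le_tail_potential_decrease[OF assms] by (simp add: algebra_simps sum_subtractf)
qed

lemma integrable_log_bound: "integrable L (\<lambda>p. 800 + 256 * \<bar>ln (1 - p)\<bar>)"
proof -
  have "integrable L (\<lambda>p. \<bar>ln (1 - p)\<bar>)"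
    by (rule integrableI_bounded) (use log_moment in \<open>auto intro: borel_measurable_Lambda\<close>)
  then show ?thesis by simp
qed

lemma integrable_miss_density:
  assumes "1 \<le> K"
  shows "integrable L (miss_density K)"
proof (rule Bochner_Integration.integrable_bound)
  show "integrable L (\<lambda>p. 800 + 256 * \<bar>ln (1 - p)\<bar>)"
    by (rule integrable_log_bound)
  show "AE p in L. norm (miss_density K p) \<le> norm (800 + 256 * \<bar>ln (1 - p)\<bar>)"
    using AE_below_one
  proof eventually_elim
    case (elim p)
    have "norm (miss_density K p) \<le> 800 + 256 * \<bar>ln (1 - p)\<bar>"
      using elim assms by (intro norm_miss_density_le) auto
    also have "\<dots> \<le> norm (800 + 256 * \<bar>ln (1 - p)\<bar>)"
      unfolding real_norm_def by (rule abs_ge_self)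
    finally show ?case .
  qed
  show "miss_density K \<in> borel_measurable L"
    unfolding miss_density_def tail_sum_majorant_def by (rule borel_measurable_Lambda) measurable
qed

lemma drop_rate_majorant_tail_sum_eq_integral:
  "drop_rate_majorant m a + (\<Sum>c=a..b. drop_rate_majorant m c / real c)
    = (\<integral>p. drop_density_majorant m a p + (\<Sum>c=a..b. drop_density_majorant m c p / real c) \<partial>L)"
proof -
  have "(\<Sum>c=a..b. drop_rate_majorant m c / real c)
      = (\<integral>p. (\<Sum>c=a..b. drop_density_majorant m c p / real c) \<partial>L)"
    unfolding drop_rate_majorant_def
    using integral_sum[where I="{a..b}" and f="\<lambda>c p. drop_density_majorant m c p / real c"]
    by (simp add: integrable_drop_density_majorant)
  then show ?thesis
    unfolding drop_rate_majorant_def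
    by (subst Bochner_Integration.integral_add)
       (auto intro!: Bochner_Integration.integrable_sum integrable_divide_zero integrable_drop_density_majorant)
qed

lemma tail_potential_le_integral_miss_density:
  assumes m: "1 \<le> m" and K: "2 \<le> K"
  shows "tail_potential m K b \<le> 2 / total_mass * (\<integral>p. miss_density K p \<partial>L)"
proof (cases "b \<le> K * m")
  case True
  have "AE p in L. 0 \<le> miss_density K p"
    using AE_below_one by eventually_elim (use miss_density_bounds(1) K in simp)
  then have "0 \<le> (\<integral>p. miss_density K p \<partial>L)" by (rule integral_nonneg_AE)
  then show ?thesis using True total_mass_pos by (simp add: tail_potential_def)
next
  case False
  have "drop_rate_majorant m (K*m+1) + (\<Sum>c=K*m+1..b. drop_rate_majorant m c / real c)
      = (\<integral>p. drop_density_majorant m (K*m+1) p + (\<Sum>c=K*m+1..b. drop_density_majorant m c p / real c) \<partial>L)"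
    by (rule drop_rate_majorant_tail_sum_eq_integral)
  also have "\<dots> \<le> (\<integral>p. miss_density K p \<partial>L)"
  proof (rule integral_mono_AE)
    show "integrable L (\<lambda>p. drop_density_majorant m (K*m+1) p + (\<Sum>c=K*m+1..b. drop_density_majorant m c p / real c))"
      by (intro Bochner_Integration.integrable_add Bochner_Integration.integrable_sum
            integrable_divide_zero integrable_drop_density_majorant)
    show "integrable L (miss_density K)" using K by (intro integrable_miss_density) simp
    show "AE p in L. drop_density_majorant m (K*m+1) p + (\<Sum>c=K*m+1..b. drop_density_majorant m c p / real c)
        \<le> miss_density K p"
      using AE_below_one
    proof eventually_elim
      case (elim p)
      then show ?case
        using miss_density_small_p[of p m K b] miss_density_large_p[of p m K b] m K
        by (cases "p < 1/16") (simp_all add: not_less)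
    qed
  qed
  finally have "drop_rate_majorant m (K*m+1) + (\<Sum>c=K*m+1..b. drop_rate_majorant m c / real c)
      \<le> (\<integral>p. miss_density K p \<partial>L)" .
  moreover have "0 \<le> 2 / total_mass" using total_mass_pos by simp
  ultimately show ?thesis
    unfolding tail_potential_def if_not_P[OF False] by (rule mult_left_mono)
qed

lemma integral_miss_density_tendsto_0: "(\<lambda>K. \<integral>p. miss_density K p \<partial>L) \<longlonglongrightarrow> 0"
proof -
  have "(\<lambda>K. \<integral>p. miss_density (K + 1) p \<partial>L) \<longlonglongrightarrow> (\<integral>p. 0 \<partial>L)"
  proof (rule integral_dominated_convergence[where w="\<lambda>p. 800 + 256 * \<bar>ln (1 - p)\<bar>"])
    show "integrable L (\<lambda>p. 800 + 256 * \<bar>ln (1 - p)\<bar>)"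
      by (rule integrable_log_bound)
    show "AE p in L. (\<lambda>K. miss_density (K + 1) p) \<longlonglongrightarrow> 0"
      using AE_below_one
    proof eventually_elim
      case (elim p)
      then have "(\<lambda>K. miss_density K p) \<longlonglongrightarrow> 0" by (intro miss_density_tendsto_0) simp
      from LIMSEQ_Suc[OF this] show ?case by simp
    qed
    show "\<And>K. AE p in L. norm (miss_density (K + 1) p) \<le> 800 + 256 * \<bar>ln (1 - p)\<bar>"
      using AE_below_one by eventually_elim (rule norm_miss_density_le; auto)
    show "miss_density (K + 1) \<in> borel_measurable L" for K
      by (rule borel_measurable_integrable, rule integrable_miss_density) simp
  qed simp
  then have "(\<lambda>K. \<integral>p. miss_density (Suc K) p \<partial>L) \<longlonglongrightarrow> 0" by simp
  then show ?thesis by (rule LIMSEQ_imp_Suc)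
qed

lemma prob_coal_path_misses_window_le:
  assumes m: "1 \<le> m" "m < n" and K: "2 \<le> K"
  shows "measure_pmf.prob (coal_path L n) (misses_window m (K * m))
    \<le> 2 / total_mass * (\<integral>p. miss_density K p \<partial>L)"
proof -
  have "card (singletons n) = n"
    unfolding singletons_def by (subst card_image) (auto simp: inj_on_def)
  moreover have "measure_pmf.prob (path L n (singletons n)) (misses_window m (K * m))
      \<le> miss_potential m K (card (singletons n))"
    using m K tail_potential_nonneg miss_potential_supermartingale[OF m(1) K]
    unfolding singletons_def
    by (intro prob_path_misses_window_le[where A="{1..n}"] partition_on_singletons)
       (auto simp: miss_potential_def card_image inj_on_def)
  ultimately show ?thesis
    using m tail_potential_le_integral_miss_density[OF m(1) K, of n]
    by (simp add: coal_path_def miss_potential_def)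
qed

end

theorem mainTheorem8:
  fixes L :: "real measure"
  assumes "finite_measure L"
    and "sets L = sets borel"
    and "emeasure L (UNIV - {0..1}) = 0"
    and "emeasure L {0..1} \<noteq> 0"
    and "emeasure L {1} = 0"
    and "(\<integral>\<^sup>+ p. ennreal \<bar>ln (1 - p)\<bar> \<partial>L) < \<infinity>"
  shows "\<forall>\<epsilon>>0. \<exists>K::nat. K > 0 \<and> (\<forall>m n::nat. 1 \<le> m \<and> m < n \<longrightarrow>
     measure_pmf.prob (coal_path L n)
       {xs. \<exists>P\<in>set xs. m < card P \<and> card P \<le> K * m} > 1 - \<epsilon>)"
proof (intro allI impI)
  interpret Lambda_log_moment L
    by (intro Lambda_log_moment.intro Lambda_measure.intro Lambda_log_moment_axioms.intro) (rule assms)+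
  fix \<epsilon> :: real assume "0 < \<epsilon>"
  have "(\<lambda>K. 2 / total_mass * (\<integral>p. miss_density K p \<partial>L)) \<longlonglongrightarrow> 2 / total_mass * 0"
    by (intro tendsto_intros integral_miss_density_tendsto_0)
  then have "\<forall>\<^sub>F K in sequentially. 2 \<le> K \<and> 2 / total_mass * (\<integral>p. miss_density K p \<partial>L) < \<epsilon>"
    using \<open>0 < \<epsilon>\<close> eventually_ge_at_top[of 2] by (auto dest: order_tendstoD(2) intro: eventually_conj)
  then obtain K where K: "2 \<le> K" "2 / total_mass * (\<integral>p. miss_density K p \<partial>L) < \<epsilon>"
    by (auto dest: eventually_happens)
  have "measure_pmf.prob (coal_path L n) {xs. \<exists>P\<in>set xs. m < card P \<and> card P \<le> K * m} > 1 - \<epsilon>"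
    if "1 \<le> m \<and> m < n" for m n
  proof -
    have "{xs. \<exists>P\<in>set xs. m < card P \<and> card P \<le> K * m} = UNIV - misses_window m (K * m)"
      by (auto simp: misses_window_def)
    then show ?thesis
      using prob_coal_path_misses_window_le[of m n K] that K measure_pmf.prob_compl[of "misses_window m (K * m)"]
      by simp
  qed
  with K show "\<exists>K::nat. K > 0 \<and> (\<forall>m n::nat. 1 \<le> m \<and> m < n \<longrightarrow>
     measure_pmf.prob (coal_path L n) {xs. \<exists>P\<in>set xs. m < card P \<and> card P \<le> K * m} > 1 - \<epsilon>)"
    by (intro exI[of _ K]) auto
qed

end
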